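(* For every $h\in\{1,\dots,H-1\}$, the estimates produced by FORC satisfy $$\|\hat d^\pi_h-\bar d^\pi_h\|_1\le\|\hat d^\pi_{h-1}-\bar d^\pi_{h-1}\|_1+2C^{\mathbf x}_{h-1}\|\hat d^D_{h-1}-d^D_{h-1}\|_1+C^{\mathbf x}_{h-1}C^{\mathbf a}_{h-1}\|\hat d^{D,\dagger}_{h-1}-d^{D,\dagger}_{h-1}\|_1+\sqrt2\Big\|\hat w^\pi_h-\mathbf E^{\bar\pi}_{h-1}\Big(d^D_{h-1}\frac{\hat d^\pi_{h-1}\wedge C^{\mathbf x}_{h-1}\hat d^D_{h-1}}{\hat d^D_{h-1}}\Big)\Big\|_{2,d^{D,\dagger}_{h-1}},$$ where $\mathbf E^{\pi}_hd:=(\mathbf P^\pi_hd)/d^{D,\dagger}_h$.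
   Context: Setting: finite-horizon episodic MDP $(\mathcal X,\mathcal A,P,H)$, measurable $\mathcal X$, finite $\mathcal A$, $[H]=\{0,\dots,H-1\}$, known initial distribution $d_0$; $d^\pi_h$ density of $x_h$ under Markov policy $\pi$. Low-rank: $P_h(x'\mid x,a)=\langle\phi^*_h(x,a),\mu^*_h(x')\rangle$, $\phi^*_h,\mu^*_h\in\mathbb R^{\mathsf d}$, $\|\phi^*_h\|_\infty\le1$, $\int\|\mu^*_h\|_1\le B^\mu$; $\mu^*$ known. Notation: $a\wedge b=\min(a,b)$, $0/0:=0$; $(\mathbf P^\pi_hd)(x'):=\iint P_h(x'\mid x,a)\pi_h(a\mid x)d(x)\mathrm dx\,\mathrm da$ for nonnegative $\pi_h$; $\|g\|_{2,\nu}:=(\int g^2\,\mathrm d\nu)^{1/2}$. Offline data: $\mathcal D_h=\{(x_h^{(i)},a_h^{(i)},x_{h+1}^{(i)})\}$, tuples generated by an arbitrary roll-in to $x_h$, then $a_h\sim\pi^D_h(\cdot\mid x_h)$ (known Markov single-step policy), then $x_{h+1}\sim P_h$ (i.i.d. conditionally on earlier data); $d^D_h,d^{D,\dagger}_h$ marginal densities of $x_h,x_{h+1}$ in $\mathcal D_h$. Clipped occupancy: $\bar\pi_h:=\pi_h\wedge C^{\mathbf a}_h\pi^D_h$, $\bar d^\pi_0=d_0$, $\bar d^\pi_h=\mathbf P^{\bar\pi}_{h-1}(\bar d^\pi_{h-1}\wedge C^{\mathbf x}_{h-1}d^D_{h-1})$. Algorithm FORC: with $\mathcal F_h:=\{\langle\mu^*_{h-1},\theta\rangle\in\Delta(\mathcal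 X):\|\theta\|_\infty\le1\}$ and $\mathcal W_h:=\{w=\langle\mu^*_{h-1},\theta^{\rm up}\rangle/\langle\mu^*_{h-1},\theta^{\rm down}\rangle:\|w\|_\infty\le C^{\mathbf x}_{h-1}C^{\mathbf a}_{h-1}\}$, set $\hat d^\pi_0=d_0$; for $h=1,\dots,H$: split $\mathcal D_{h-1}$ randomly into $\mathcal D^{\rm mle}$ ($n_{\rm mle}$) and $\mathcal D^{\rm reg}$ ($n_{\rm reg}$); $\hat d^D_{h-1}\in\arg\max_{f\in\mathcal F_{h-1}}\sum_{\mathcal D^{\rm mle}}\log f(x^{(i)}_{h-1})$, $\hat d^{D,\dagger}_{h-1}\in\arg\max_{f\in\mathcal F_h}\sum_{\mathcal D^{\rm mle}}\log f(x^{(i)}_h)$; $\hat w^\pi_h\in\arg\min_{w\in\mathcal W_h}\frac1{n_{\rm reg}}\sum_{\mathcal D^{\rm reg}}\big(w(x^{(i)}_h)-\tilde w(x^{(i)}_{h-1})\frac{\bar\pi_{h-1}(a^{(i)}_{h-1}\mid x^{(i)}_{h-1})}{\pi^D_{h-1}(a^{(i)}_{h-1}\mid x^{(i)}_{h-1})}\big)^2$ with $\tilde w=(\hat d^\pi_{h-1}\wedge C^{\mathbf x}_{h-1}\hat d^D_{h-1})/\hat d^D_{h-1}$; $\hat d^\pi_h:=\hat w^\pi_h\hat d^{D,\dagger}_{h-1}$. *)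

theory Defs
  imports "HOL-Analysis.Analysis"
begin

text \<open>Densities are taken with respect to a fixed (sigma-finite) base measure M on the
  state space X.  Functions are real-valued; norms are valued in ennreal so that they are
  always defined (possibly infinite).\<close>

definition is_density :: "'x measure \<Rightarrow> ('x \<Rightarrow> real) \<Rightarrow> bool" where
  "is_density M f \<longleftrightarrow> f \<in> borel_measurable M \<and> (\<forall>x\<in>space M. 0 \<le> f x)
      \<and> (\<integral>\<^sup>+ x. ennreal (f x) \<partial>M) = 1"

definition is_policy :: "'x measure \<Rightarrow> ('x \<Rightarrow> 'a::finite \<Rightarrow> real) \<Rightarrow> bool" where
  "is_policy M p \<longleftrightarrow> (\<forall>a. (\<lambda>x. p x a) \<in> borel_measurable M)
      \<and> (\<forall>x\<in>space M. (\<forall>a. 0 \<le> p x a) \<and> (\<Sum>a\<in>UNIV. p x a) = 1)"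

definition lowrank_P :: "(nat \<Rightarrow> 'x \<Rightarrow> 'a \<Rightarrow> real^'d) \<Rightarrow> (nat \<Rightarrow> 'x \<Rightarrow> real^'d)
    \<Rightarrow> nat \<Rightarrow> 'x \<Rightarrow> 'a \<Rightarrow> 'x \<Rightarrow> real" where
  "lowrank_P \<phi> \<mu> h x a x' = \<phi> h x a \<bullet> \<mu> h x'"

definition Pop :: "'x measure \<Rightarrow> (nat \<Rightarrow> 'x \<Rightarrow> 'a::finite \<Rightarrow> 'x \<Rightarrow> real) \<Rightarrow> nat
    \<Rightarrow> ('x \<Rightarrow> 'a \<Rightarrow> real) \<Rightarrow> ('x \<Rightarrow> real) \<Rightarrow> 'x \<Rightarrow> real" where
  "Pop M P h p d x' = (\<integral> x. (\<Sum>a\<in>UNIV. P h x a x' * p x a) * d x \<partial>M)"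

text \<open>E^pi_h d := (P^pi_h d) / d^{D,dagger}_h  (with Isabelle's convention c/0 = 0).\<close>
definition Eop :: "'x measure \<Rightarrow> (nat \<Rightarrow> 'x \<Rightarrow> 'a::finite \<Rightarrow> 'x \<Rightarrow> real) \<Rightarrow> nat
    \<Rightarrow> ('x \<Rightarrow> 'a \<Rightarrow> real) \<Rightarrow> ('x \<Rightarrow> real) \<Rightarrow> ('x \<Rightarrow> real) \<Rightarrow> 'x \<Rightarrow> real" where
  "Eop M P h p dDd d x' = Pop M P h p d x' / dDd x'"

definition clip_pol :: "real \<Rightarrow> ('x \<Rightarrow> 'a \<Rightarrow> real) \<Rightarrow> ('x \<Rightarrow> 'a \<Rightarrow> real) \<Rightarrow> 'x \<Rightarrow> 'a \<Rightarrow> real" where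
  "clip_pol Ca p pD x a = min (p x a) (Ca * pD x a)"

primrec bar_d :: "'x measure \<Rightarrow> (nat \<Rightarrow> 'x \<Rightarrow> 'a::finite \<Rightarrow> 'x \<Rightarrow> real)
    \<Rightarrow> (nat \<Rightarrow> 'x \<Rightarrow> 'a \<Rightarrow> real) \<Rightarrow> (nat \<Rightarrow> 'x \<Rightarrow> 'a \<Rightarrow> real)
    \<Rightarrow> (nat \<Rightarrow> real) \<Rightarrow> (nat \<Rightarrow> real) \<Rightarrow> (nat \<Rightarrow> 'x \<Rightarrow> real) \<Rightarrow> ('x \<Rightarrow> real)
    \<Rightarrow> nat \<Rightarrow> 'x \<Rightarrow> real" where
  "bar_d M P \<pi> \<pi>D Cx Ca dD d0 0 = d0"
| "bar_d M P \<pi> \<pi>D Cx Ca dD d0 (Suc h) =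
     Pop M P h (clip_pol (Ca h) (\<pi> h) (\<pi>D h))
       (\<lambda>x. min (bar_d M P \<pi> \<pi>D Cx Ca dD d0 h x) (Cx h * dD h x))"

definition Fcls :: "'x measure \<Rightarrow> (nat \<Rightarrow> 'x \<Rightarrow> real^'d) \<Rightarrow> nat \<Rightarrow> ('x \<Rightarrow> real) set" where
  "Fcls M \<mu> h = {f. \<exists>\<theta>::real^'d. (\<forall>i. \<bar>\<theta> $ i\<bar> \<le> 1)
       \<and> f = (\<lambda>x. \<mu> (h - 1) x \<bullet> \<theta>) \<and> is_density M f}"

text \<open>The class used for the MLE at level k: F_k for k \<ge> 1, and a given class F0 of
  densities at level 0 (F_0 would need mu_{-1}).\<close>
definition Fcls_gen :: "'x measure \<Rightarrow> (nat \<Rightarrow> 'x \<Rightarrow> real^'d) \<Rightarrow> ('x \<Rightarrow> real) set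
    \<Rightarrow> nat \<Rightarrow> ('x \<Rightarrow> real) set" where
  "Fcls_gen M \<mu> F0 k = (if k = 0 then F0 else Fcls M \<mu> k)"

definition Wcls :: "'x measure \<Rightarrow> (nat \<Rightarrow> 'x \<Rightarrow> real^'d) \<Rightarrow> real \<Rightarrow> nat \<Rightarrow> ('x \<Rightarrow> real) set" where
  "Wcls M \<mu> C h = {w. \<exists>\<theta>u \<theta>d :: real^'d.
       (\<forall>i. \<bar>\<theta>u $ i\<bar> \<le> 1) \<and> (\<forall>i. \<bar>\<theta>d $ i\<bar> \<le> 1)
     \<and> (\<forall>x\<in>space M. 0 \<le> \<mu> (h - 1) x \<bullet> \<theta>u \<and> 0 \<le> \<mu> (h - 1) x \<bullet> \<theta>d)
     \<and> w = (\<lambda>x. (\<mu> (h - 1) x \<bullet> \<theta>u) / (\<mu> (h - 1) x \<bullet> \<theta>d))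
     \<and> (\<forall>x\<in>space M. \<bar>w x\<bar> \<le> C)}"

definition tilde_w :: "real \<Rightarrow> ('x \<Rightarrow> real) \<Rightarrow> ('x \<Rightarrow> real) \<Rightarrow> 'x \<Rightarrow> real" where
  "tilde_w Cx dh dDh x = min (dh x) (Cx * dDh x) / dDh x"

text \<open>Specification of the outputs of FORC (for one fixed realisation of the data and of the
  random split): dhat is \<open>hat d^pi\<close>, dDhat k = \<open>hat d^D_k\<close>, dDdhat k = \<open>hat d^{D,dagger}_k\<close>,
  what h = \<open>hat w^pi_h\<close>.  Maximising the log-likelihood is rendered as maximising the
  likelihood (product), which is the same with log 0 = -infinity.\<close>
definition forc_outputs ::
  "'x measure \<Rightarrow> (nat \<Rightarrow> 'x \<Rightarrow> real^'d) \<Rightarrow> ('x \<Rightarrow> real) set \<Rightarrow> nat \<Rightarrow> ('x \<Rightarrow> real)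
   \<Rightarrow> (nat \<Rightarrow> real) \<Rightarrow> (nat \<Rightarrow> real) \<Rightarrow> (nat \<Rightarrow> 'x \<Rightarrow> 'a \<Rightarrow> real) \<Rightarrow> (nat \<Rightarrow> 'x \<Rightarrow> 'a \<Rightarrow> real)
   \<Rightarrow> (nat \<Rightarrow> ('x \<times> 'a \<times> 'x) list) \<Rightarrow> (nat \<Rightarrow> ('x \<times> 'a \<times> 'x) list) \<Rightarrow> (nat \<Rightarrow> ('x \<times> 'a \<times> 'x) list)
   \<Rightarrow> (nat \<Rightarrow> 'x \<Rightarrow> real) \<Rightarrow> (nat \<Rightarrow> 'x \<Rightarrow> real) \<Rightarrow> (nat \<Rightarrow> 'x \<Rightarrow> real) \<Rightarrow> (nat \<Rightarrow> 'x \<Rightarrow> real)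
   \<Rightarrow> bool" where
  "forc_outputs M \<mu> F0 H d0 Cx Ca \<pi> \<pi>D D Dmle Dreg dDhat dDdhat what dhat \<longleftrightarrow>
     dhat 0 = d0 \<and>
     (\<forall>h\<in>{1..H}.
        mset (Dmle (h - 1)) + mset (Dreg (h - 1)) = mset (D (h - 1))
      \<and> is_arg_max (\<lambda>f. prod_list (map (\<lambda>(x, a, x'). f x) (Dmle (h - 1))))
                   (\<lambda>f. f \<in> Fcls_gen M \<mu> F0 (h - 1)) (dDhat (h - 1))
      \<and> is_arg_max (\<lambda>f. prod_list (map (\<lambda>(x, a, x'). f x') (Dmle (h - 1))))
                   (\<lambda>f. f \<in> Fcls M \<mu> h) (dDdhat (h - 1))
      \<and> is_arg_min (\<lambda>w. sum_list (map (\<lambda>(x, a, x').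
                        (w x' - tilde_w (Cx (h - 1)) (dhat (h - 1)) (dDhat (h - 1)) x
                           * clip_pol (Ca (h - 1)) (\<pi> (h - 1)) (\<pi>D (h - 1)) x a
                           / \<pi>D (h - 1) x a)\<^sup>2) (Dreg (h - 1)))
                     / real (length (Dreg (h - 1))))
                   (\<lambda>w. w \<in> Wcls M \<mu> (Cx (h - 1) * Ca (h - 1)) h) (what h)
      \<and> dhat h = (\<lambda>x. what h x * dDdhat (h - 1) x))"

definition norm1 :: "'x measure \<Rightarrow> ('x \<Rightarrow> real) \<Rightarrow> ('x \<Rightarrow> real) \<Rightarrow> ennreal" where
  "norm1 M f g = (\<integral>\<^sup>+ x. ennreal \<bar>f x - g x\<bar> \<partial>M)"

definition ennsqrt :: "ennreal \<Rightarrow> ennreal" where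
  "ennsqrt e = (if e = \<infinity> then \<infinity> else ennreal (sqrt (enn2real e)))"

definition norm2 :: "'x measure \<Rightarrow> ('x \<Rightarrow> real) \<Rightarrow> ennreal" where
  "norm2 \<nu> g = ennsqrt (\<integral>\<^sup>+ x. ennreal ((g x)\<^sup>2) \<partial>\<nu>)"

end

theory Submission
  imports Defs
begin

(*
  Write k = h - 1, rho = d^D_k, F = P^{bar pi}_k (rho * tilde_w) and
  G = bar d^pi_h = P^{bar pi}_k (min (bar d^pi_k) (C^x rho)), and split
    hat d_h - G = hat w (hat d^{D,dagger}_k - d^{D,dagger}_k) + (hat w d^{D,dagger}_k - F) + (F - G).
  The first term is controlled by |hat w| <= C^x C^a.  Transition operators are L1
  contractions, so the last term is at most || rho tilde_w - min (bar d^pi_k) (C^x rho) ||_1,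
  which is bounded pointwise by 2 C^x |hat d^D_k - rho| + |hat d^pi_k - bar d^pi_k|.
  Clipping gives F <= C^x C^a d^{D,dagger}_k, so F vanishes where d^{D,dagger}_k does and the
  middle term equals (hat w - F / d^{D,dagger}_k) d^{D,dagger}_k; its L1 norm is an L1 norm
  under the subprobability d^{D,dagger}_k, hence at most the L2 norm by Cauchy-Schwarz.
*)

lemma tilde_w_nonneg: "0 \<le> d x \<Longrightarrow> 0 \<le> e x \<Longrightarrow> 0 \<le> C \<Longrightarrow> 0 \<le> tilde_w C d e x"
  by (simp add: tilde_w_def)

lemma tilde_w_le: "0 \<le> e x \<Longrightarrow> 0 \<le> C \<Longrightarrow> tilde_w C d e x \<le> C"
  by (cases "e x = 0") (simp_all add: tilde_w_def divide_le_eq)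

lemma abs_clip_ratio_error_le:
  fixes a e d b C :: real
  assumes a: "0 \<le> a" and e: "0 \<le> e" and d: "0 \<le> d" and C: "0 \<le> C"
  shows "\<bar>a * (min d (C * e) / e) - min b (C * a)\<bar> \<le> 2 * C * \<bar>e - a\<bar> + \<bar>d - b\<bar>"
proof (cases "e = 0")
  case True
  then show ?thesis using a d C by (auto simp: abs_if min_def)
next
  case False
  define t where "t = min d (C * e) / e"
  have te: "t * e = min d (C * e)" using False by (simp add: t_def)
  have split: "a * t - min b (C * a)
      = t * (a - e) + (min d (C * e) - min d (C * a)) + (min d (C * a) - min b (C * a))"
    using te by (simp add: algebra_simps)
  have "\<bar>a * t - min b (C * a)\<bar>
      \<le> \<bar>t * (a - e)\<bar> + \<bar>min d (C * e) - min d (C * a)\<bar> + \<bar>min d (C * a) - min b (C * a)\<bar>"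
    unfolding split by (rule order_trans[OF abs_triangle_ineq add_right_mono[OF abs_triangle_ineq]])
  also have "\<dots> \<le> C * \<bar>e - a\<bar> + C * \<bar>e - a\<bar> + \<bar>d - b\<bar>"
  proof (intro add_mono)
    have "0 \<le> t" "t \<le> C" using d C e False by (simp_all add: t_def divide_le_eq)
    then show "\<bar>t * (a - e)\<bar> \<le> C * \<bar>e - a\<bar>"
      by (simp add: abs_mult abs_minus_commute mult_right_mono)
    have "\<bar>min d (C * e) - min d (C * a)\<bar> \<le> \<bar>C * e - C * a\<bar>" by (simp add: min_def abs_if)
    also have "\<dots> = C * \<bar>e - a\<bar>" using C by (simp add: abs_mult right_diff_distrib[symmetric])
    finally show "\<bar>min d (C * e) - min d (C * a)\<bar> \<le> C * \<bar>e - a\<bar>" .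
    show "\<bar>min d (C * a) - min b (C * a)\<bar> \<le> \<bar>d - b\<bar>" by (auto simp: min_def abs_if)
  qed
  finally show ?thesis unfolding t_def[symmetric] by simp
qed

lemma abs_mult_sub_eq_abs_sub_divide_mult:
  fixes w q F :: real
  assumes "0 \<le> q" and "q = 0 \<Longrightarrow> F = 0"
  shows "\<bar>w * q - F\<bar> = \<bar>w - F / q\<bar> * q"
proof (cases "q = 0")
  case False
  then have "w * q - F = (w - F / q) * q" by (simp add: field_simps)
  then show ?thesis using assms(1) by (simp add: abs_mult)
qed (use assms in simp)

lemma nn_integral_abs_le_norm2:
  assumes N: "emeasure N (space N) \<le> 1" and g: "g \<in> borel_measurable N"
  shows "(\<integral>\<^sup>+x. ennreal \<bar>g x\<bar> \<partial>N) \<le> norm2 N g"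
proof -
  define X where "X = (\<integral>\<^sup>+x. ennreal \<bar>g x\<bar> \<partial>N)"
  define Y where "Y = (\<integral>\<^sup>+x. ennreal ((g x)\<^sup>2) \<partial>N)"
  have "X\<^sup>2 \<le> (\<integral>\<^sup>+x. (ennreal \<bar>g x\<bar>)\<^sup>2 \<partial>N) * (\<integral>\<^sup>+x. 1\<^sup>2 \<partial>N)"
    using Cauchy_Schwarz_nn_integral[of "\<lambda>x. ennreal \<bar>g x\<bar>" N "\<lambda>_. 1"] g
    unfolding X_def by simp
  also have "\<dots> = Y * emeasure N (space N)"
    unfolding Y_def by (simp add: ennreal_power)
  also have "\<dots> \<le> Y"
    using mult_left_mono[OF N, of Y] by simp
  finally have XY: "X\<^sup>2 \<le> Y" .
  show ?thesis
  proof (cases "Y = \<infinity>")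
    case True
    then show ?thesis by (simp add: norm2_def ennsqrt_def Y_def)
  next
    case False
    then obtain y where y: "Y = ennreal y" "0 \<le> y" by (cases Y) auto
    have "X \<noteq> \<infinity>" using XY y by (auto simp: power2_eq_square top_unique)
    then obtain x where x: "X = ennreal x" "0 \<le> x" by (cases X) auto
    have "x\<^sup>2 \<le> y" using XY x y by (simp add: ennreal_power)
    then have "x \<le> sqrt y" using x(2) by (simp add: real_le_rsqrt)
    then show ?thesis
      using x y unfolding norm2_def X_def[symmetric] Y_def[symmetric] by (simp add: ennsqrt_def)
  qed
qed

lemma is_densityD:
  assumes "is_density M f"
  shows is_density_measurable: "f \<in> borel_measurable M"
    and is_density_nonneg: "\<And>x. x \<in> space M \<Longrightarrow> 0 \<le> f x"
    and is_density_integrable: "integrable M f"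
    and is_density_nn_integral: "(\<integral>\<^sup>+x. ennreal (f x) \<partial>M) = 1"
  using assms by (auto simp: is_density_def intro!: integrableI_nonneg AE_I2)

definition is_subpolicy :: "'x measure \<Rightarrow> ('x \<Rightarrow> 'a::finite \<Rightarrow> real) \<Rightarrow> bool" where
  "is_subpolicy M p \<longleftrightarrow> (\<forall>a. (\<lambda>x. p x a) \<in> borel_measurable M)
      \<and> (\<forall>x\<in>space M. (\<forall>a. 0 \<le> p x a) \<and> (\<Sum>a\<in>UNIV. p x a) \<le> 1)"

lemma is_subpolicy_if_is_policy: "is_policy M p \<Longrightarrow> is_subpolicy M p"
  by (simp add: is_policy_def is_subpolicy_def)

lemma is_subpolicy_clip_pol:
  assumes p: "is_policy M p" and q: "is_policy M q" and C: "0 \<le> C"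
  shows "is_subpolicy M (clip_pol C p q)"
  unfolding is_subpolicy_def
proof (intro conjI ballI allI)
  fix a
  have [measurable]: "(\<lambda>x. p x a) \<in> borel_measurable M" "(\<lambda>x. q x a) \<in> borel_measurable M"
    using p q by (simp_all add: is_policy_def)
  show "(\<lambda>x. clip_pol C p q x a) \<in> borel_measurable M"
    unfolding clip_pol_def by measurable
next
  fix x a assume x: "x \<in> space M"
  show "0 \<le> clip_pol C p q x a"
    using p q C x by (simp add: is_policy_def clip_pol_def)
  have "(\<Sum>a\<in>UNIV. clip_pol C p q x a) \<le> (\<Sum>a\<in>UNIV. p x a)"
    by (intro sum_mono) (simp add: clip_pol_def)
  then show "(\<Sum>a\<in>UNIV. clip_pol C p q x a) \<le> 1"
    using p x by (simp add: is_policy_def)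
qed

definition policy_kernel :: "('x \<Rightarrow> 'a::finite \<Rightarrow> 'x \<Rightarrow> real) \<Rightarrow> ('x \<Rightarrow> 'a \<Rightarrow> real) \<Rightarrow> 'x \<Rightarrow> 'x \<Rightarrow> real" where
  "policy_kernel T p x x' = (\<Sum>a\<in>UNIV. T x a x' * p x a)"

lemma Pop_eq_integral_policy_kernel:
  "Pop M P k p d x' = (\<integral>x. policy_kernel (P k) p x x' * d x \<partial>M)"
  by (simp add: Pop_def policy_kernel_def)

lemma Pop_cmult: "Pop M P k p (\<lambda>x. c * d x) x' = c * Pop M P k p d x'"
  by (simp add: Pop_def mult.left_commute)

(* Boundedness in x for fixed x' makes the transition integral of every integrable density
   well defined; for low-rank P it follows from |phi| <= 1. *)
locale transition_step = sigma_finite_measure M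
  for M :: "'x measure" and P :: "nat \<Rightarrow> 'x \<Rightarrow> 'a::finite \<Rightarrow> 'x \<Rightarrow> real" and k :: nat +
  assumes measurable_P_pair: "\<And>a. (\<lambda>(x, x'). P k x a x') \<in> borel_measurable (M \<Otimes>\<^sub>M M)"
    and P_nonneg: "\<And>x a x'. x \<in> space M \<Longrightarrow> x' \<in> space M \<Longrightarrow> 0 \<le> P k x a x'"
    and P_substochastic: "\<And>x a. x \<in> space M \<Longrightarrow> (\<integral>\<^sup>+x'. ennreal (P k x a x') \<partial>M) \<le> 1"
    and P_bounded: "\<And>x'. x' \<in> space M \<Longrightarrow> \<exists>S. \<forall>x\<in>space M. \<forall>a. P k x a x' \<le> S"
begin

lemma measurable_P [measurable]:
  assumes [measurable]: "f \<in> measurable N M" "g \<in> measurable N M"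
  shows "(\<lambda>z. P k (f z) a (g z)) \<in> borel_measurable N"
  using measurable_compose[OF measurable_Pair[OF assms] measurable_P_pair[of a]] by simp

context
  fixes p :: "'x \<Rightarrow> 'a \<Rightarrow> real"
  assumes p: "is_subpolicy M p"
begin

lemma measurable_policy [measurable]: "(\<lambda>x. p x a) \<in> borel_measurable M"
  using p by (simp add: is_subpolicy_def)

lemma measurable_policy_kernel [measurable]:
  assumes [measurable]: "f \<in> measurable N M" "g \<in> measurable N M"
  shows "(\<lambda>z. policy_kernel (P k) p (f z) (g z)) \<in> borel_measurable N"
  unfolding policy_kernel_def by measurable

lemma policy_kernel_nonneg: "x \<in> space M \<Longrightarrow> x' \<in> space M \<Longrightarrow> 0 \<le> policy_kernel (P k) p x x'"
  using p P_nonneg by (auto simp: policy_kernel_def is_subpolicy_def intro!: sum_nonneg)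

lemma policy_kernel_substochastic:
  assumes x: "x \<in> space M"
  shows "(\<integral>\<^sup>+x'. ennreal (policy_kernel (P k) p x x') \<partial>M) \<le> 1"
proof -
  have p0: "\<And>a. 0 \<le> p x a" and p1: "(\<Sum>a\<in>UNIV. p x a) \<le> 1"
    using p x by (auto simp: is_subpolicy_def)
  have "(\<integral>\<^sup>+x'. ennreal (policy_kernel (P k) p x x') \<partial>M)
      = (\<integral>\<^sup>+x'. (\<Sum>a\<in>UNIV. ennreal (p x a) * ennreal (P k x a x')) \<partial>M)"
    using P_nonneg[OF x] p0
    by (intro nn_integral_cong) (simp add: policy_kernel_def ennreal_mult[symmetric] mult.commute)
  also have "\<dots> = (\<Sum>a\<in>UNIV. ennreal (p x a) * (\<integral>\<^sup>+x'. ennreal (P k x a x') \<partial>M))"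
    using x by (simp add: nn_integral_sum nn_integral_cmult)
  also have "\<dots> \<le> (\<Sum>a\<in>UNIV. ennreal (p x a))"
    using P_substochastic[OF x] by (intro sum_mono) (metis mult.right_neutral mult_left_mono zero_le)
  also have "\<dots> = ennreal (\<Sum>a\<in>UNIV. p x a)" using p0 by simp
  also have "\<dots> \<le> 1" using p1 by simp
  finally show ?thesis .
qed

lemma policy_kernel_bounded:
  assumes x': "x' \<in> space M"
  obtains S where "\<And>x. x \<in> space M \<Longrightarrow> \<bar>policy_kernel (P k) p x x'\<bar> \<le> S"
proof -
  obtain S where S: "\<And>x a. x \<in> space M \<Longrightarrow> P k x a x' \<le> S"
    using P_bounded[OF x'] by blast
  have "\<bar>policy_kernel (P k) p x x'\<bar> \<le> max S 0" if x: "x \<in> space M" for x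
  proof -
    have p0: "\<And>a. 0 \<le> p x a" and p1: "(\<Sum>a\<in>UNIV. p x a) \<le> 1"
      using p x by (auto simp: is_subpolicy_def)
    have "policy_kernel (P k) p x x' \<le> (\<Sum>a\<in>UNIV. max S 0 * p x a)"
      unfolding policy_kernel_def using order_trans[OF S[OF x] max.cobounded1] p0
      by (intro sum_mono mult_right_mono) auto
    also have "\<dots> \<le> max S 0"
      using p1 by (simp add: sum_distrib_left[symmetric] mult_left_le)
    finally show ?thesis using policy_kernel_nonneg[OF x x'] by simp
  qed
  then show thesis by (rule that)
qed

lemma integrable_policy_kernel_mult:
  assumes f: "integrable M f" and x': "x' \<in> space M"
  shows "integrable M (\<lambda>x. policy_kernel (P k) p x x' * f x)"
proof -
  obtain S where S: "\<And>x. x \<in> space M \<Longrightarrow> \<bar>policy_kernel (P k) p x x'\<bar> \<le> S"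
    using policy_kernel_bounded[OF x'] by blast
  show ?thesis
  proof (rule Bochner_Integration.integrable_bound[where f="\<lambda>x. S * f x"])
    show "integrable M (\<lambda>x. S * f x)" using f by simp
    show "(\<lambda>x. policy_kernel (P k) p x x' * f x) \<in> borel_measurable M"
      by measurable (use f x' in auto)
    show "AE x in M. norm (policy_kernel (P k) p x x' * f x) \<le> norm (S * f x)"
      using mult_right_mono[OF order_trans[OF S abs_ge_self] abs_ge_zero]
      by (intro AE_I2) (simp add: abs_mult)
  qed
qed

lemma Pop_measurable [measurable]:
  assumes [measurable]: "d \<in> borel_measurable M"
  shows "Pop M P k p d \<in> borel_measurable M"
  unfolding Pop_eq_integral_policy_kernel[abs_def]
  by (rule borel_measurable_lebesgue_integral) measurable

lemma Pop_nonneg: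
  "(\<And>x. x \<in> space M \<Longrightarrow> 0 \<le> d x) \<Longrightarrow> x' \<in> space M \<Longrightarrow> 0 \<le> Pop M P k p d x'"
  unfolding Pop_eq_integral_policy_kernel
  by (intro integral_nonneg_AE AE_I2 mult_nonneg_nonneg policy_kernel_nonneg) auto

lemma nn_integral_policy_kernel_le:
  assumes [measurable]: "u \<in> borel_measurable M"
  shows "(\<integral>\<^sup>+x'. (\<integral>\<^sup>+x. ennreal (policy_kernel (P k) p x x') * u x \<partial>M) \<partial>M) \<le> (\<integral>\<^sup>+x. u x \<partial>M)"
proof -
  interpret pair_sigma_finite M M ..
  have "(\<integral>\<^sup>+x'. (\<integral>\<^sup>+x. ennreal (policy_kernel (P k) p x x') * u x \<partial>M) \<partial>M)
      = (\<integral>\<^sup>+x. (\<integral>\<^sup>+x'. ennreal (policy_kernel (P k) p x x') * u x \<partial>M) \<partial>M)"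
    by (rule Fubini') measurable
  also have "\<dots> = (\<integral>\<^sup>+x. (\<integral>\<^sup>+x'. ennreal (policy_kernel (P k) p x x') \<partial>M) * u x \<partial>M)"
    by (intro nn_integral_cong nn_integral_multc) measurable
  also have "\<dots> \<le> (\<integral>\<^sup>+x. u x \<partial>M)"
    using policy_kernel_substochastic
    by (intro nn_integral_mono) (metis mult_1 mult_right_mono zero_le)
  finally show ?thesis .
qed

lemma norm1_Pop_le:
  assumes f: "integrable M f" and g: "integrable M g"
  shows "norm1 M (Pop M P k p f) (Pop M P k p g) \<le> norm1 M f g"
proof -
  have [measurable]: "f \<in> borel_measurable M" "g \<in> borel_measurable M" using f g by auto
  have "ennreal \<bar>Pop M P k p f x' - Pop M P k p g x'\<bar>
      \<le> (\<integral>\<^sup>+x. ennreal (policy_kernel (P k) p x x') * ennreal \<bar>f x - g x\<bar> \<partial>M)"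
    if x': "x' \<in> space M" for x'
  proof -
    note fi = integrable_policy_kernel_mult[OF f x'] and gi = integrable_policy_kernel_mult[OF g x']
    have "Pop M P k p f x' - Pop M P k p g x'
        = (\<integral>x. policy_kernel (P k) p x x' * f x - policy_kernel (P k) p x x' * g x \<partial>M)"
      using fi gi by (simp add: Pop_eq_integral_policy_kernel)
    then have "ennreal \<bar>Pop M P k p f x' - Pop M P k p g x'\<bar>
        \<le> (\<integral>\<^sup>+x. norm (policy_kernel (P k) p x x' * f x - policy_kernel (P k) p x x' * g x) \<partial>M)"
      using integral_norm_bound_ennreal[OF Bochner_Integration.integrable_diff[OF fi gi]] by simp
    also have "\<dots> = (\<integral>\<^sup>+x. ennreal (policy_kernel (P k) p x x') * ennreal \<bar>f x - g x\<bar> \<partial>M)"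
      using policy_kernel_nonneg[OF _ x']
      by (intro nn_integral_cong) (simp add: right_diff_distrib[symmetric] abs_mult ennreal_mult)
    finally show ?thesis .
  qed
  then have "norm1 M (Pop M P k p f) (Pop M P k p g)
      \<le> (\<integral>\<^sup>+x'. (\<integral>\<^sup>+x. ennreal (policy_kernel (P k) p x x') * ennreal \<bar>f x - g x\<bar> \<partial>M) \<partial>M)"
    unfolding norm1_def by (rule nn_integral_mono)
  also have "\<dots> \<le> norm1 M f g"
    unfolding norm1_def by (rule nn_integral_policy_kernel_le) measurable
  finally show ?thesis .
qed

lemma nn_integral_Pop_density_le_1:
  assumes d: "is_density M d"
  shows "(\<integral>\<^sup>+x'. ennreal (Pop M P k p d x') \<partial>M) \<le> 1"
proof -
  have "(\<integral>\<^sup>+x'. ennreal (Pop M P k p d x') \<partial>M) = norm1 M (Pop M P k p d) (Pop M P k p (\<lambda>_. 0))"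
    unfolding norm1_def
    using Pop_nonneg[OF is_density_nonneg[OF d]] by (intro nn_integral_cong) (simp add: Pop_def)
  also have "\<dots> \<le> norm1 M d (\<lambda>_. 0)"
    using is_density_integrable[OF d] by (intro norm1_Pop_le) auto
  also have "\<dots> = 1"
    using is_density_nn_integral[OF d] is_density_nonneg[OF d]
    unfolding norm1_def by (metis (no_types, lifting) abs_of_nonneg diff_zero nn_integral_cong)
  finally show ?thesis .
qed

end

lemma Pop_mono:
  assumes p: "is_subpolicy M p" and q: "is_subpolicy M q"
    and f: "integrable M f" and g: "integrable M g"
    and le: "\<And>x a. x \<in> space M \<Longrightarrow> p x a * f x \<le> q x a * g x"
    and x': "x' \<in> space M"
  shows "Pop M P k p f x' \<le> Pop M P k q g x'"
  unfolding Pop_eq_integral_policy_kernel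
proof (rule integral_mono[OF integrable_policy_kernel_mult[OF p f x'] integrable_policy_kernel_mult[OF q g x']])
  fix x assume x: "x \<in> space M"
  show "policy_kernel (P k) p x x' * f x \<le> policy_kernel (P k) q x x' * g x"
    unfolding policy_kernel_def sum_distrib_right mult.assoc
    using le[OF x] P_nonneg[OF x x'] by (intro sum_mono mult_left_mono) auto
qed

(* p and q play the roles of bar pi_k and pi^D_k. *)
context
  fixes p q :: "'x \<Rightarrow> 'a \<Rightarrow> real" and Cx Ca :: real and dD dD_hat d_hat d_bar :: "'x \<Rightarrow> real"
  assumes p: "is_subpolicy M p" and q: "is_subpolicy M q"
    and p_le_q: "\<And>x a. x \<in> space M \<Longrightarrow> p x a \<le> Ca * q x a"
    and Cx: "0 \<le> Cx" and Ca: "0 \<le> Ca"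
    and dD: "is_density M dD"
    and estimates_measurable [measurable]:
      "dD_hat \<in> borel_measurable M" "d_hat \<in> borel_measurable M" "d_bar \<in> borel_measurable M"
    and estimates_nonneg:
      "\<And>x. x \<in> space M \<Longrightarrow> 0 \<le> dD_hat x" "\<And>x. x \<in> space M \<Longrightarrow> 0 \<le> d_hat x"
      "\<And>x. x \<in> space M \<Longrightarrow> 0 \<le> d_bar x"
begin

lemma measurable_clipped_weight [measurable]:
  "dD \<in> borel_measurable M" "(\<lambda>x. tilde_w Cx d_hat dD_hat x) \<in> borel_measurable M"
  using is_density_measurable[OF dD] unfolding tilde_w_def by measurable

lemma clipped_weights_bounded:
  assumes x: "x \<in> space M"
  shows "\<bar>dD x * tilde_w Cx d_hat dD_hat x\<bar> \<le> Cx * dD x" and "\<bar>min (d_bar x) (Cx * dD x)\<bar> \<le> Cx * dD x"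
proof -
  have dD0: "0 \<le> dD x" by (rule is_density_nonneg[OF dD x])
  have "0 \<le> tilde_w Cx d_hat dD_hat x" "tilde_w Cx d_hat dD_hat x \<le> Cx"
    using estimates_nonneg[OF x] Cx by (simp_all add: tilde_w_nonneg tilde_w_le)
  then show "\<bar>dD x * tilde_w Cx d_hat dD_hat x\<bar> \<le> Cx * dD x"
    using mult_right_mono[OF _ dD0, of "tilde_w Cx d_hat dD_hat x" Cx] dD0 by (simp add: mult.commute)
  show "\<bar>min (d_bar x) (Cx * dD x)\<bar> \<le> Cx * dD x"
    using estimates_nonneg(3)[OF x] Cx dD0 by simp
qed

lemma integrable_clipped_weights:
  shows "integrable M (\<lambda>x. dD x * tilde_w Cx d_hat dD_hat x)"
    and "integrable M (\<lambda>x. min (d_bar x) (Cx * dD x))"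
proof -
  have CdD: "integrable M (\<lambda>x. Cx * dD x)" using is_density_integrable[OF dD] by simp
  show "integrable M (\<lambda>x. dD x * tilde_w Cx d_hat dD_hat x)"
    by (rule Bochner_Integration.integrable_bound[OF CdD _ AE_I2])
      (use order_trans[OF clipped_weights_bounded(1) abs_ge_self] in auto)
  show "integrable M (\<lambda>x. min (d_bar x) (Cx * dD x))"
    by (rule Bochner_Integration.integrable_bound[OF CdD _ AE_I2])
      (use order_trans[OF clipped_weights_bounded(2) abs_ge_self] in auto)
qed

lemma norm1_Pop_clip_error_le:
  "norm1 M (Pop M P k p (\<lambda>x. dD x * tilde_w Cx d_hat dD_hat x)) (Pop M P k p (\<lambda>x. min (d_bar x) (Cx * dD x)))
     \<le> ennreal (2 * Cx) * norm1 M dD_hat dD + norm1 M d_hat d_bar"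
proof -
  have "ennreal \<bar>dD x * tilde_w Cx d_hat dD_hat x - min (d_bar x) (Cx * dD x)\<bar>
      \<le> ennreal (2 * Cx) * ennreal \<bar>dD_hat x - dD x\<bar> + ennreal \<bar>d_hat x - d_bar x\<bar>"
    if x: "x \<in> space M" for x
  proof -
    have "\<bar>dD x * tilde_w Cx d_hat dD_hat x - min (d_bar x) (Cx * dD x)\<bar>
        \<le> 2 * Cx * \<bar>dD_hat x - dD x\<bar> + \<bar>d_hat x - d_bar x\<bar>"
      unfolding tilde_w_def
      using is_density_nonneg[OF dD x] estimates_nonneg[OF x] Cx by (intro abs_clip_ratio_error_le)
    then show ?thesis
      using Cx by (simp add: ennreal_mult[symmetric] ennreal_plus[symmetric] del: ennreal_plus)
  qed
  then have "norm1 M (\<lambda>x. dD x * tilde_w Cx d_hat dD_hat x) (\<lambda>x. min (d_bar x) (Cx * dD x))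
      \<le> (\<integral>\<^sup>+x. ennreal (2 * Cx) * ennreal \<bar>dD_hat x - dD x\<bar> + ennreal \<bar>d_hat x - d_bar x\<bar> \<partial>M)"
    unfolding norm1_def by (rule nn_integral_mono)
  also have "\<dots> = ennreal (2 * Cx) * norm1 M dD_hat dD + norm1 M d_hat d_bar"
    unfolding norm1_def by (simp add: nn_integral_add nn_integral_cmult)
  finally show ?thesis
    using norm1_Pop_le[OF p integrable_clipped_weights] by (rule order_trans[rotated])
qed

lemma Pop_clipped_weight_le:
  assumes x': "x' \<in> space M"
  shows "Pop M P k p (\<lambda>x. dD x * tilde_w Cx d_hat dD_hat x) x' \<le> Cx * Ca * Pop M P k q dD x'"
proof -
  have "Pop M P k p (\<lambda>x. dD x * tilde_w Cx d_hat dD_hat x) x' \<le> Pop M P k q (\<lambda>x. Cx * Ca * dD x) x'"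
  proof (rule Pop_mono[OF p q integrable_clipped_weights(1) _ _ x'])
    show "integrable M (\<lambda>x. Cx * Ca * dD x)"
      by (intro integrable_mult_right is_density_integrable[OF dD])
    fix x a assume x: "x \<in> space M"
    have "0 \<le> q x a" using q x unfolding is_subpolicy_def by blast
    then have "p x a * tilde_w Cx d_hat dD_hat x \<le> (Ca * q x a) * Cx"
      using p_le_q[OF x] Ca estimates_nonneg[OF x] Cx
      by (intro mult_mono) (simp_all add: tilde_w_nonneg tilde_w_le)
    from mult_left_mono[OF this is_density_nonneg[OF dD x]]
    show "p x a * (dD x * tilde_w Cx d_hat dD_hat x) \<le> q x a * (Cx * Ca * dD x)"
      by (simp add: mult_ac)
  qed
  then show ?thesis by (simp add: Pop_cmult)
qed

lemma nn_integral_weight_error_le: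
  assumes w [measurable]: "w \<in> borel_measurable M"
  shows "(\<integral>\<^sup>+x'. ennreal \<bar>w x' * Pop M P k q dD x' - Pop M P k p (\<lambda>x. dD x * tilde_w Cx d_hat dD_hat x) x'\<bar> \<partial>M)
    \<le> ennreal (sqrt 2) * norm2 (density M (\<lambda>x. ennreal (Pop M P k q dD x)))
        (\<lambda>x'. w x' - Eop M P k p (Pop M P k q dD) (\<lambda>x. dD x * tilde_w Cx d_hat dD_hat x) x')"
proof -
  let ?D = "Pop M P k q dD" and ?F = "Pop M P k p (\<lambda>x. dD x * tilde_w Cx d_hat dD_hat x)"
  let ?E = "\<lambda>x'. w x' - Eop M P k p ?D (\<lambda>x. dD x * tilde_w Cx d_hat dD_hat x) x'"
  let ?N = "density M (\<lambda>x. ennreal (?D x))"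
  have [measurable]: "?D \<in> borel_measurable M" "?F \<in> borel_measurable M"
    by (intro Pop_measurable[OF q] Pop_measurable[OF p]; measurable)+
  have E_measurable: "?E \<in> borel_measurable M" unfolding Eop_def by measurable
  have D0: "0 \<le> ?D x'" if "x' \<in> space M" for x'
    using Pop_nonneg[OF q is_density_nonneg[OF dD] that] .
  have "ennreal \<bar>w x' * ?D x' - ?F x'\<bar> = ennreal (?D x') * ennreal \<bar>?E x'\<bar>"
    if x': "x' \<in> space M" for x'
  proof -
    have F0: "0 \<le> ?F x'"
      using estimates_nonneg Cx is_density_nonneg[OF dD]
      by (intro Pop_nonneg[OF p _ x'] mult_nonneg_nonneg tilde_w_nonneg) auto
    have "?D x' = 0 \<Longrightarrow> ?F x' = 0"
      using F0 Pop_clipped_weight_le[OF x'] by simp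
    then have "\<bar>w x' * ?D x' - ?F x'\<bar> = \<bar>?E x'\<bar> * ?D x'"
      using D0[OF x'] by (simp add: abs_mult_sub_eq_abs_sub_divide_mult Eop_def)
    then show ?thesis using D0[OF x'] by (simp add: ennreal_mult mult.commute)
  qed
  then have "(\<integral>\<^sup>+x'. ennreal \<bar>w x' * ?D x' - ?F x'\<bar> \<partial>M) = (\<integral>\<^sup>+x'. ennreal \<bar>?E x'\<bar> \<partial>?N)"
    using E_measurable by (simp add: nn_integral_density cong: nn_integral_cong)
  also have "\<dots> \<le> norm2 ?N ?E"
  proof (rule nn_integral_abs_le_norm2)
    have "emeasure ?N (space ?N) = (\<integral>\<^sup>+x'. ennreal (?D x') \<partial>M)"
      by (simp add: emeasure_density)
    also have "\<dots> \<le> 1" by (rule nn_integral_Pop_density_le_1[OF q dD])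
    finally show "emeasure ?N (space ?N) \<le> 1" .
    show "?E \<in> borel_measurable ?N" using E_measurable by simp
  qed
  also have "\<dots> \<le> ennreal (sqrt 2) * norm2 ?N ?E"
    using mult_right_mono[of 1 "ennreal (sqrt 2)" "norm2 ?N ?E"] by (simp add: ennreal_ge_1)
  finally show ?thesis .
qed

lemma norm1_one_step_le:
  assumes w [measurable]: "w \<in> borel_measurable M" and w_le: "\<And>x. x \<in> space M \<Longrightarrow> \<bar>w x\<bar> \<le> Cx * Ca"
    and dDd_hat [measurable]: "dDd_hat \<in> borel_measurable M"
  shows "norm1 M (\<lambda>x'. w x' * dDd_hat x') (Pop M P k p (\<lambda>x. min (d_bar x) (Cx * dD x)))
    \<le> norm1 M d_hat d_bar + ennreal (2 * Cx) * norm1 M dD_hat dD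
      + ennreal (Cx * Ca) * norm1 M dDd_hat (Pop M P k q dD)
      + ennreal (sqrt 2) * norm2 (density M (\<lambda>x. ennreal (Pop M P k q dD x)))
          (\<lambda>x'. w x' - Eop M P k p (Pop M P k q dD) (\<lambda>x. dD x * tilde_w Cx d_hat dD_hat x) x')"
proof -
  let ?D = "Pop M P k q dD" and ?F = "Pop M P k p (\<lambda>x. dD x * tilde_w Cx d_hat dD_hat x)"
    and ?G = "Pop M P k p (\<lambda>x. min (d_bar x) (Cx * dD x))"
  have [measurable]: "?D \<in> borel_measurable M" "?F \<in> borel_measurable M" "?G \<in> borel_measurable M"
    by (intro Pop_measurable[OF q] Pop_measurable[OF p]; measurable)+
  have "ennreal \<bar>w x' * dDd_hat x' - ?G x'\<bar>
      \<le> ennreal (Cx * Ca) * ennreal \<bar>dDd_hat x' - ?D x'\<bar> + ennreal \<bar>w x' * ?D x' - ?F x'\<bar>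
        + ennreal \<bar>?F x' - ?G x'\<bar>" if x': "x' \<in> space M" for x'
  proof -
    have "\<bar>w x' * (dDd_hat x' - ?D x')\<bar> \<le> Cx * Ca * \<bar>dDd_hat x' - ?D x'\<bar>"
      using w_le[OF x'] by (simp add: abs_mult mult_right_mono)
    then have "\<bar>w x' * dDd_hat x' - ?G x'\<bar>
        \<le> Cx * Ca * \<bar>dDd_hat x' - ?D x'\<bar> + \<bar>w x' * ?D x' - ?F x'\<bar> + \<bar>?F x' - ?G x'\<bar>"
      by (simp add: right_diff_distrib abs_triangle_ineq4)
    then show ?thesis
      using Cx Ca by (simp add: ennreal_mult[symmetric] ennreal_plus[symmetric] del: ennreal_plus)
  qed
  then have "norm1 M (\<lambda>x'. w x' * dDd_hat x') ?G
      \<le> (\<integral>\<^sup>+x'. ennreal (Cx * Ca) * ennreal \<bar>dDd_hat x' - ?D x'\<bar> + ennreal \<bar>w x' * ?D x' - ?F x'\<bar>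
        + ennreal \<bar>?F x' - ?G x'\<bar> \<partial>M)"
    unfolding norm1_def by (rule nn_integral_mono)
  also have "\<dots> = ennreal (Cx * Ca) * norm1 M dDd_hat ?D
      + (\<integral>\<^sup>+x'. ennreal \<bar>w x' * ?D x' - ?F x'\<bar> \<partial>M) + norm1 M ?F ?G"
    unfolding norm1_def by (simp add: nn_integral_add nn_integral_cmult)
  also have "\<dots> \<le> ennreal (Cx * Ca) * norm1 M dDd_hat ?D
      + ennreal (sqrt 2) * norm2 (density M (\<lambda>x. ennreal (?D x)))
          (\<lambda>x'. w x' - Eop M P k p ?D (\<lambda>x. dD x * tilde_w Cx d_hat dD_hat x) x')
      + (ennreal (2 * Cx) * norm1 M dD_hat dD + norm1 M d_hat d_bar)"
    by (intro add_mono order_refl nn_integral_weight_error_le norm1_Pop_clip_error_le w)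
  finally show ?thesis by (simp add: ac_simps)
qed

end

end

lemma lowrank_P_le:
  assumes "\<And>i. \<bar>\<phi> k x a $ i\<bar> \<le> 1"
  shows "lowrank_P \<phi> \<mu> k x a x' \<le> (\<Sum>i\<in>UNIV. \<bar>\<mu> k x' $ i\<bar>)"
proof -
  have "lowrank_P \<phi> \<mu> k x a x' \<le> (\<Sum>i\<in>UNIV. \<bar>\<phi> k x a $ i * \<mu> k x' $ i\<bar>)"
    unfolding lowrank_P_def inner_vec_def inner_real_def by (rule order_trans[OF abs_ge_self sum_abs])
  also have "\<dots> \<le> (\<Sum>i\<in>UNIV. \<bar>\<mu> k x' $ i\<bar>)"
    using assms by (intro sum_mono) (simp add: abs_mult mult_left_le_one_le)
  finally show ?thesis .
qed

lemma transition_step_lowrank_P: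
  assumes "sigma_finite_measure M"
    and [measurable]: "\<And>a. (\<lambda>x. \<phi> k x a) \<in> borel_measurable M" "\<mu> k \<in> borel_measurable M"
    and "\<And>x a i. \<bar>\<phi> k x a $ i\<bar> \<le> 1"
    and "\<And>x a x'. x \<in> space M \<Longrightarrow> x' \<in> space M \<Longrightarrow> 0 \<le> lowrank_P \<phi> \<mu> k x a x'"
    and "\<And>x a. x \<in> space M \<Longrightarrow> (\<integral>\<^sup>+x'. ennreal (lowrank_P \<phi> \<mu> k x a x') \<partial>M) = 1"
  shows "transition_step M (lowrank_P \<phi> \<mu>) k"
proof (intro_locales)
  show "sigma_finite_measure M" by fact
  show "transition_step_axioms M (lowrank_P \<phi> \<mu>) k"
  proof
    show "(\<lambda>(x, x'). lowrank_P \<phi> \<mu> k x a x') \<in> borel_measurable (M \<Otimes>\<^sub>M M)" for a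
      unfolding lowrank_P_def by measurable
    show "\<exists>S. \<forall>x\<in>space M. \<forall>a. lowrank_P \<phi> \<mu> k x a x' \<le> S" for x'
      by (intro exI[of _ "\<Sum>i\<in>UNIV. \<bar>\<mu> k x' $ i\<bar>"] ballI allI lowrank_P_le assms(4))
  qed (use assms(5,6) in simp_all)
qed

lemma bar_d_nonneg_measurable:
  assumes "\<And>j. j < n \<Longrightarrow> transition_step M P j"
    and "is_density M d0"
    and "\<And>j. j < n \<Longrightarrow> is_policy M (\<pi> j)" and "\<And>j. j < n \<Longrightarrow> is_policy M (\<pi>D j)"
    and "\<And>j. j < n \<Longrightarrow> is_density M (dD j)"
    and "\<And>j. 0 \<le> Cx j" and "\<And>j. 0 \<le> Ca j"
  shows "bar_d M P \<pi> \<pi>D Cx Ca dD d0 n \<in> borel_measurable M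
    \<and> (\<forall>x\<in>space M. 0 \<le> bar_d M P \<pi> \<pi>D Cx Ca dD d0 n x)"
  using assms(1,3-5)
proof (induction n)
  case 0
  then show ?case using is_densityD(1,2)[OF assms(2)] by simp
next
  case (Suc j)
  interpret transition_step M P j by (rule Suc.prems(1)) simp
  have pol: "is_subpolicy M (clip_pol (Ca j) (\<pi> j) (\<pi>D j))"
    using Suc.prems assms(7) by (intro is_subpolicy_clip_pol) auto
  have dD: "is_density M (dD j)" using Suc.prems(4) by simp
  have IH: "bar_d M P \<pi> \<pi>D Cx Ca dD d0 j \<in> borel_measurable M"
    "\<And>x. x \<in> space M \<Longrightarrow> 0 \<le> bar_d M P \<pi> \<pi>D Cx Ca dD d0 j x"
    using Suc by auto
  show ?case
    using IH is_densityD(1,2)[OF dD] assms(6)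
    by (auto intro!: Pop_measurable[OF pol] Pop_nonneg[OF pol])
qed

lemma is_density_if_Fcls: "f \<in> Fcls M \<mu> j \<Longrightarrow> is_density M f"
  by (auto simp: Fcls_def)

lemma is_density_if_Fcls_gen:
  "F0 \<subseteq> {f. is_density M f} \<Longrightarrow> f \<in> Fcls_gen M \<mu> F0 j \<Longrightarrow> is_density M f"
  by (auto simp: Fcls_gen_def Fcls_def split: if_splits)

lemma WclsD:
  assumes "w \<in> Wcls M \<mu> C j" and [measurable]: "\<mu> (j - 1) \<in> borel_measurable M"
  shows Wcls_measurable: "w \<in> borel_measurable M"
    and Wcls_nonneg: "\<And>x. x \<in> space M \<Longrightarrow> 0 \<le> w x"
    and Wcls_abs_le: "\<And>x. x \<in> space M \<Longrightarrow> \<bar>w x\<bar> \<le> C"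
proof -
  obtain \<theta>u \<theta>d where
    nonneg: "\<forall>x\<in>space M. 0 \<le> \<mu> (j - 1) x \<bullet> \<theta>u \<and> 0 \<le> \<mu> (j - 1) x \<bullet> \<theta>d"
    and w: "w = (\<lambda>x. (\<mu> (j - 1) x \<bullet> \<theta>u) / (\<mu> (j - 1) x \<bullet> \<theta>d))"
    and le: "\<forall>x\<in>space M. \<bar>w x\<bar> \<le> C"
    using assms(1) unfolding Wcls_def by blast
  show "w \<in> borel_measurable M" unfolding w by measurable
  show "\<And>x. x \<in> space M \<Longrightarrow> 0 \<le> w x" using nonneg unfolding w by simp
  show "\<And>x. x \<in> space M \<Longrightarrow> \<bar>w x\<bar> \<le> C" using le by blast
qed

lemma forc_outputs_step:
  assumes "forc_outputs M \<mu> F0 H d0 Cx Ca \<pi> \<pi>D D Dmle Dreg dDhat dDdhat what dhat" and "Suc k \<le> H"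
  shows "what (Suc k) \<in> Wcls M \<mu> (Cx k * Ca k) (Suc k)"
    and "dDdhat k \<in> Fcls M \<mu> (Suc k)"
    and "dDhat k \<in> Fcls_gen M \<mu> F0 k"
    and "dhat (Suc k) = (\<lambda>x. what (Suc k) x * dDdhat k x)"
  using assms unfolding forc_outputs_def is_arg_max_def is_arg_min_def
  by (metis atLeastAtMost_iff diff_Suc_1 le_add1 plus_1_eq_Suc)+

lemma forc_outputs_estimate_nonneg_measurable:
  assumes forc: "forc_outputs M \<mu> F0 H d0 Cx Ca \<pi> \<pi>D D Dmle Dreg dDhat dDdhat what dhat"
    and d0: "is_density M d0" and \<mu>: "\<And>j. j < H \<Longrightarrow> \<mu> j \<in> borel_measurable M" and "k \<le> H"
  shows "dhat k \<in> borel_measurable M \<and> (\<forall>x\<in>space M. 0 \<le> dhat k x)"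
proof (cases k)
  case 0
  then show ?thesis using forc is_densityD(1,2)[OF d0] by (simp add: forc_outputs_def)
next
  case (Suc j)
  then have "Suc j \<le> H" using \<open>k \<le> H\<close> by simp
  note step = forc_outputs_step[OF forc this]
  have "\<mu> (Suc j - 1) \<in> borel_measurable M" using \<mu> \<open>Suc j \<le> H\<close> by simp
  note w = WclsD[OF step(1) this] and f = is_densityD(1,2)[OF is_density_if_Fcls[OF step(2)]]
  show ?thesis unfolding Suc step(4) using w f by auto
qed

theorem lemma1:
  fixes M :: "'x measure"
    and \<phi> :: "nat \<Rightarrow> 'x \<Rightarrow> 'a::finite \<Rightarrow> real^'d"
    and \<mu> :: "nat \<Rightarrow> 'x \<Rightarrow> real^'d"
    and B\<mu> :: real and H :: nat and d0 :: "'x \<Rightarrow> real"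
    and \<pi> \<pi>D :: "nat \<Rightarrow> 'x \<Rightarrow> 'a \<Rightarrow> real"
    and Cx Ca :: "nat \<Rightarrow> real"
    and dD dDd :: "nat \<Rightarrow> 'x \<Rightarrow> real"
    and F0 :: "('x \<Rightarrow> real) set"
    and D Dmle Dreg :: "nat \<Rightarrow> ('x \<times> 'a \<times> 'x) list"
    and dDhat dDdhat what dhat :: "nat \<Rightarrow> 'x \<Rightarrow> real"
    and h :: nat
  assumes "sigma_finite_measure M"
    \<comment> \<open>low-rank MDP with proper transition densities\<close>
    and "\<And>k a. k < H \<Longrightarrow> (\<lambda>x. \<phi> k x a) \<in> borel_measurable M"
    and "\<And>k. k < H \<Longrightarrow> \<mu> k \<in> borel_measurable M"
    and "\<And>k x a i. k < H \<Longrightarrow> \<bar>\<phi> k x a $ i\<bar> \<le> 1"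
    and "\<And>k. k < H \<Longrightarrow> (\<integral>\<^sup>+ x'. ennreal (\<Sum>i\<in>UNIV. \<bar>\<mu> k x' $ i\<bar>) \<partial>M) \<le> ennreal B\<mu>"
    and "\<And>k x a x'. k < H \<Longrightarrow> x \<in> space M \<Longrightarrow> x' \<in> space M \<Longrightarrow> 0 \<le> lowrank_P \<phi> \<mu> k x a x'"
    and "\<And>k x a. k < H \<Longrightarrow> x \<in> space M \<Longrightarrow>
           (\<integral>\<^sup>+ x'. ennreal (lowrank_P \<phi> \<mu> k x a x') \<partial>M) = 1"
    \<comment> \<open>initial distribution, target and data policies, clipping constants\<close>
    and "is_density M d0"
    and "\<And>k. k < H \<Longrightarrow> is_policy M (\<pi> k)"
    and "\<And>k. k < H \<Longrightarrow> is_policy M (\<pi>D k)"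
    and "\<And>k. 0 \<le> Cx k" and "\<And>k. 0 \<le> Ca k"
    \<comment> \<open>data densities: x_k ~ dD k, a_k ~ piD_k, x_{k+1} ~ P_k\<close>
    and "\<And>k. k < H \<Longrightarrow> is_density M (dD k)"
    and "\<And>k. k < H \<Longrightarrow> dDd k = Pop M (lowrank_P \<phi> \<mu>) k (\<pi>D k) (dD k)"
    \<comment> \<open>the outputs of FORC\<close>
    and "F0 \<subseteq> {f. is_density M f}"
    and "forc_outputs M \<mu> F0 H d0 Cx Ca \<pi> \<pi>D D Dmle Dreg dDhat dDdhat what dhat"
    and "h \<in> {1..H - 1}"
  shows "norm1 M (dhat h) (bar_d M (lowrank_P \<phi> \<mu>) \<pi> \<pi>D Cx Ca dD d0 h)
   \<le> norm1 M (dhat (h - 1)) (bar_d M (lowrank_P \<phi> \<mu>) \<pi> \<pi>D Cx Ca dD d0 (h - 1))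
     + ennreal (2 * Cx (h - 1)) * norm1 M (dDhat (h - 1)) (dD (h - 1))
     + ennreal (Cx (h - 1) * Ca (h - 1)) * norm1 M (dDdhat (h - 1)) (dDd (h - 1))
     + ennreal (sqrt 2) * norm2 (density M (\<lambda>x. ennreal (dDd (h - 1) x)))
         (\<lambda>x'. what h x' - Eop M (lowrank_P \<phi> \<mu>) (h - 1)
                   (clip_pol (Ca (h - 1)) (\<pi> (h - 1)) (\<pi>D (h - 1))) (dDd (h - 1))
                   (\<lambda>x. dD (h - 1) x * tilde_w (Cx (h - 1)) (dhat (h - 1)) (dDhat (h - 1)) x) x')"
proof -
  obtain k where hk: "h = Suc k" and kH: "k < H" using assms(17) by (cases h) auto
  have step: "transition_step M (lowrank_P \<phi> \<mu>) j" if "j < H" for j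
    using assms(1-4,6,7) that by (intro transition_step_lowrank_P) auto
  interpret transition_step M "lowrank_P \<phi> \<mu>" k by (rule step[OF kH])
  note out = forc_outputs_step[OF assms(16) Suc_leI[OF kH]]
  have \<mu>k: "\<mu> (Suc k - 1) \<in> borel_measurable M" using assms(3) kH by simp
  have bar_d: "bar_d M (lowrank_P \<phi> \<mu>) \<pi> \<pi>D Cx Ca dD d0 k \<in> borel_measurable M
      \<and> (\<forall>x\<in>space M. 0 \<le> bar_d M (lowrank_P \<phi> \<mu>) \<pi> \<pi>D Cx Ca dD d0 k x)"
    using kH by (intro bar_d_nonneg_measurable step assms(8-13)) auto
  have dhat: "dhat k \<in> borel_measurable M \<and> (\<forall>x\<in>space M. 0 \<le> dhat k x)"
    using kH by (intro forc_outputs_estimate_nonneg_measurable[OF assms(16,8)] assms(3)) auto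
  have dDhat: "is_density M (dDhat k)" by (rule is_density_if_Fcls_gen[OF assms(15) out(3)])
  show ?thesis
    unfolding hk diff_Suc_1 bar_d.simps(2) out(4) assms(14)[OF kH]
  proof (rule norm1_one_step_le)
    show "is_subpolicy M (clip_pol (Ca k) (\<pi> k) (\<pi>D k))"
      using assms(9,10,12) kH by (intro is_subpolicy_clip_pol) auto
    show "is_subpolicy M (\<pi>D k)" using assms(10) kH by (intro is_subpolicy_if_is_policy) auto
    show "clip_pol (Ca k) (\<pi> k) (\<pi>D k) x a \<le> Ca k * \<pi>D k x a" for x a by (simp add: clip_pol_def)
    show "is_density M (dD k)" using assms(13) kH by auto
  qed (use assms(11,12) bar_d dhat is_densityD(1,2)[OF dDhat] kH
         WclsD[OF out(1) \<mu>k] is_densityD(1)[OF is_density_if_Fcls[OF out(2)]] in auto)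
qed

end
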